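(* Let $(x_i,v_i)_{i=1}^N$ be differentiable functions of $t$ (on some time interval) with values in $\mathbb{R}^3$, satisfying $\dot x_i=v_i$ for all $i\in\{1,\dots,N\}$. Assume that, for all $i,j\in\{1,\dots,N\}$ and all times considered, $$\|x_i\|=1,\quad \langle v_i,x_i\rangle=0,\quad \|v_i\|\le\mathcal{V}_{max},\quad x_i\neq-x_j.$$ Then there is a constant $C>0$, independent of $t$, such that $$\Big\|\frac{d}{dt}R(x_j,x_i)\Big\|\le C\mathcal{V}_{max}+\frac{C}{\|x_i+x_j\|}\mathcal{V}_{max}.$$
   Context: $\|\cdot\|$ is the Euclidean norm on vectors and the induced (spectral) norm on $3\times3$ matrices; $\mathcal{V}_{max}\ge0$ is a constant. For column vectors $x_1,x_2$ in the unit sphere with $x_1\ne-x_2$, $R(x_1,x_2)=I$ if $x_1=x_2$, and otherwise $$R(x_1,x_2)=\langle x_1,x_2\rangle I-x_1x_2^T+x_2x_1^T+(1-\langle x_1,x_2\rangle)\Big(\frac{x_1\times x_2}{\|x_1\times x_2\|}\Big)\Big(\frac{x_1\times x_2}{\|x_1\times x_2\|}\Big)^T.$$ *)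

theory Defs
  imports "HOL-Analysis.Analysis" "HOL-Analysis.Cross3"
begin

definition outer3 :: "real^3 \<Rightarrow> real^3 \<Rightarrow> real^3^3" where
  "outer3 u w = (\<chi> i j. u $ i * w $ j)"

definition mat_norm :: "real^3^3 \<Rightarrow> real" where
  "mat_norm A = onorm (\<lambda>y. A *v y)"

definition Rot :: "real^3 \<Rightarrow> real^3 \<Rightarrow> real^3^3" where
  "Rot x1 x2 =
    (if x1 = x2 then mat 1
     else (x1 \<bullet> x2) *\<^sub>R mat 1 - outer3 x1 x2 + outer3 x2 x1
          + (1 - x1 \<bullet> x2) *\<^sub>R
              outer3 ((1 / norm (cross3 x1 x2)) *\<^sub>R cross3 x1 x2)
                     ((1 / norm (cross3 x1 x2)) *\<^sub>R cross3 x1 x2))"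

end

theory Submission
  imports Defs
begin

text \<open>
  For unit vectors with \<open>x1 \<noteq> -x2\<close> one has \<open>2 \<parallel>x1 \<times> x2\<parallel> = \<parallel>x1 - x2\<parallel> \<parallel>x1 + x2\<parallel>\<close> and
  \<open>1 - \<langle>x1, x2\<rangle> = \<parallel>x1 - x2\<parallel>\<^sup>2 / 2\<close>, so the coefficient \<open>(1 - \<langle>x1, x2\<rangle>) / \<parallel>x1 \<times> x2\<parallel>\<^sup>2\<close> of R
  equals \<open>2 / \<parallel>x1 + x2\<parallel>\<^sup>2\<close>. Hence R agrees, including at \<open>x1 = x2\<close>, with an expression that is
  smooth away from \<open>x1 = -x2\<close> and can be differentiated by the product rule. Every term of the
  derivative is bounded by a multiple of \<open>V\<^sub>m\<^sub>a\<^sub>x\<close>; in the terms containing \<open>w w\<^sup>T\<close>, \<open>w = x1 \<times> x2\<close>,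
  the bound \<open>\<parallel>w\<parallel> \<le> \<parallel>x1 + x2\<parallel>\<close> cancels all but one power of \<open>1 / \<parallel>x1 + x2\<parallel>\<close>.
\<close>

lemma outer3_mult_vec: "outer3 u w *v y = (w \<bullet> y) *\<^sub>R u"
  by (simp add: outer3_def matrix_vector_mult_def vec_eq_iff inner_vec_def sum_distrib_left algebra_simps)

lemma bounded_bilinear_outer3: "bounded_bilinear outer3"
  unfolding bilinear_conv_bounded_bilinear[symmetric] bilinear_def
  by (auto intro!: linearI simp: outer3_def vec_eq_iff algebra_simps)

lemma bounded_bilinear_cross3: "bounded_bilinear cross3"
  using bilinear_cross bilinear_conv_bounded_bilinear by blast

lemma outer3_scaleR: "outer3 (r *\<^sub>R u) (s *\<^sub>R w) = (r * s) *\<^sub>R outer3 u w"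
  by (simp add: outer3_def vec_eq_iff)

lemma mat_norm_add_le: "mat_norm (A + B) \<le> mat_norm A + mat_norm B"
  unfolding mat_norm_def matrix_vector_mult_add_rdistrib
  by (intro onorm_triangle matrix_vector_mul_bounded_linear)

lemma mat_norm_nonneg: "0 \<le> mat_norm A"
  unfolding mat_norm_def by (intro onorm_pos_le matrix_vector_mul_bounded_linear)

lemma mat_norm_scaleR: "mat_norm (r *\<^sub>R A) = \<bar>r\<bar> * mat_norm A"
  unfolding mat_norm_def scaleR_matrix_vector_assoc[symmetric]
  by (intro onorm_scaleR matrix_vector_mul_bounded_linear)

lemma mat_norm_diff_le: "mat_norm (A - B) \<le> mat_norm A + mat_norm B"
  using mat_norm_add_le[of A "(- 1) *\<^sub>R B"] mat_norm_scaleR[of "- 1" B] by simp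

lemma mat_norm_mat_1: "mat_norm (mat 1) = 1"
  by (simp add: mat_norm_def onorm_id)

lemma mat_norm_outer3_le: "mat_norm (outer3 u w) \<le> norm u * norm w"
  unfolding mat_norm_def outer3_mult_vec
proof (rule onorm_le)
  show "norm ((w \<bullet> y) *\<^sub>R u) \<le> norm u * norm w * norm y" for y
    using Cauchy_Schwarz_ineq2[of w y]
    by (simp add: mult.commute mult.left_commute mult_left_mono)
qed

lemma norm_cross3_le: "norm (cross3 x y) \<le> norm x * norm y"
  using norm_cross_dot[of x y]
  by (metis abs_norm_cancel le_add_same_cancel1 norm_ge_zero norm_mult power2_le_iff_abs_le zero_le_power2 real_norm_def)

lemma norm_add_sq_unit:
  assumes "norm x1 = 1" "norm x2 = 1"
  shows "(norm (x1 + x2))\<^sup>2 = 2 + 2 * (x1 \<bullet> x2)"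
proof -
  have "x1 \<bullet> x1 = 1" "x2 \<bullet> x2 = 1"
    using assms by (simp_all add: dot_square_norm)
  then show ?thesis
    by (simp add: power2_norm_eq_inner inner_add inner_commute)
qed

lemma norm_diff_sq_unit:
  assumes "norm x1 = 1" "norm x2 = 1"
  shows "(norm (x1 - x2))\<^sup>2 = 2 - 2 * (x1 \<bullet> x2)"
proof -
  have "x1 \<bullet> x1 = 1" "x2 \<bullet> x2 = 1"
    using assms by (simp_all add: dot_square_norm)
  then show ?thesis
    by (simp add: power2_norm_eq_inner inner_diff inner_commute)
qed

lemma norm_cross3_unit:
  assumes "norm x1 = 1" "norm x2 = 1"
  shows "2 * norm (cross3 x1 x2) = norm (x1 - x2) * norm (x1 + x2)"
proof -
  have "(2 * norm (cross3 x1 x2))\<^sup>2 = 4 * (1 - (x1 \<bullet> x2)\<^sup>2)"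
    using norm_cross_dot[of x1 x2] assms by simp
  also have "\<dots> = (norm (x1 - x2))\<^sup>2 * (norm (x1 + x2))\<^sup>2"
    unfolding norm_add_sq_unit[OF assms] norm_diff_sq_unit[OF assms] by algebra
  finally have "(2 * norm (cross3 x1 x2))\<^sup>2 = (norm (x1 - x2) * norm (x1 + x2))\<^sup>2"
    by (simp add: power_mult_distrib)
  then show ?thesis
    by (rule power2_eq_imp_eq) simp_all
qed

lemma norm_cross3_le_norm_add:
  assumes "norm x1 = 1" "norm x2 = 1"
  shows "norm (cross3 x1 x2) \<le> norm (x1 + x2)"
proof -
  have "norm (x1 - x2) \<le> 2"
    using norm_triangle_ineq4[of x1 x2] assms by simp
  then show ?thesis
    using norm_cross3_unit[OF assms] mult_right_mono[of "norm (x1 - x2)" 2 "norm (x1 + x2)"] by simp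
qed

definition Rot_smooth :: "real^3 \<Rightarrow> real^3 \<Rightarrow> real^3^3" where
  "Rot_smooth x1 x2 = (x1 \<bullet> x2) *\<^sub>R mat 1 - outer3 x1 x2 + outer3 x2 x1
     + (2 / (norm (x1 + x2))\<^sup>2) *\<^sub>R outer3 (cross3 x1 x2) (cross3 x1 x2)"


lemma Rot_eq_Rot_smooth:
  assumes unit: "norm x1 = 1" "norm x2 = 1" and "x1 \<noteq> - x2"
  shows "Rot x1 x2 = Rot_smooth x1 x2"
proof (cases "x1 = x2")
  case True
  have "x2 \<bullet> x2 = 1"
    using unit by (simp add: dot_square_norm)
  moreover have "outer3 0 0 = 0"
    by (simp add: outer3_def vec_eq_iff)
  ultimately show ?thesis
    using True by (simp add: Rot_def Rot_smooth_def)
next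
  case False
  have nonzero: "norm (x1 + x2) \<noteq> 0" "norm (x1 - x2) \<noteq> 0"
    using False \<open>x1 \<noteq> - x2\<close> by (auto simp: add_eq_0_iff)
  have c: "1 - x1 \<bullet> x2 = (norm (x1 - x2))\<^sup>2 / 2"
    using norm_diff_sq_unit[OF unit] by simp
  have w: "norm (cross3 x1 x2) = norm (x1 - x2) * norm (x1 + x2) / 2"
    using norm_cross3_unit[OF unit] by simp
  have "(1 - x1 \<bullet> x2) * (1 / norm (cross3 x1 x2) * (1 / norm (cross3 x1 x2)))
      = 2 / (norm (x1 + x2))\<^sup>2"
    unfolding c w using nonzero by (simp add: field_simps power2_eq_square)
  with False show ?thesis
    by (simp add: Rot_def Rot_smooth_def outer3_scaleR)
qed

definition Rot_smooth_deriv :: "real^3 \<Rightarrow> real^3 \<Rightarrow> real^3 \<Rightarrow> real^3 \<Rightarrow> real^3^3" where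
  "Rot_smooth_deriv x1 x2 v1 v2 =
    (let w = cross3 x1 x2; w' = cross3 x1 v2 + cross3 v1 x2; p = norm (x1 + x2) in
     (x1 \<bullet> v2 + v1 \<bullet> x2) *\<^sub>R mat 1 - (outer3 x1 v2 + outer3 v1 x2) + (outer3 x2 v1 + outer3 v2 x1)
     + (2 / p\<^sup>2) *\<^sub>R (outer3 w w' + outer3 w' w)
     - (4 * ((x1 + x2) \<bullet> (v1 + v2)) / p ^ 4) *\<^sub>R outer3 w w)"

lemma has_field_derivative_inverse_norm_sq:
  fixes f :: "real \<Rightarrow> 'a::real_inner"
  assumes f: "(f has_vector_derivative v) (at t within S)" and "f t \<noteq> 0"
  shows "((\<lambda>s. c / (norm (f s))\<^sup>2) has_field_derivative
           - (2 * c * (f t \<bullet> v) / norm (f t) ^ 4)) (at t within S)"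
proof -
  have "((\<lambda>s. f s \<bullet> f s) has_vector_derivative f t \<bullet> v + v \<bullet> f t) (at t within S)"
    by (rule bounded_bilinear.has_vector_derivative[OF bounded_bilinear_inner f f])
  then have "((\<lambda>s. (norm (f s))\<^sup>2) has_field_derivative 2 * (f t \<bullet> v)) (at t within S)"
    by (simp add: has_real_derivative_iff_has_vector_derivative power2_norm_eq_inner inner_commute)
  from DERIV_divide[OF DERIV_const[of c] this] show ?thesis
    using \<open>f t \<noteq> 0\<close> by (simp add: power4_eq_xxxx power2_eq_square mult_ac)
qed

lemma has_vector_derivative_Rot_smooth:
  assumes f1: "(f1 has_vector_derivative v1) (at t within S)"
    and f2: "(f2 has_vector_derivative v2) (at t within S)"
    and "f1 t \<noteq> - f2 t"
  shows "((\<lambda>s. Rot_smooth (f1 s) (f2 s)) has_vector_derivative Rot_smooth_deriv (f1 t) (f2 t) v1 v2)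
           (at t within S)"
proof -
  note outer3_rule = bounded_bilinear.has_vector_derivative[OF bounded_bilinear_outer3]
  have "((\<lambda>s. f1 s \<bullet> f2 s) has_field_derivative f1 t \<bullet> v2 + v1 \<bullet> f2 t) (at t within S)"
    using bounded_bilinear.has_vector_derivative[OF bounded_bilinear_inner f1 f2]
    by (simp add: has_real_derivative_iff_has_vector_derivative)
  from has_vector_derivative_scaleR[OF this has_vector_derivative_const[of "mat 1"]]
  have inner: "((\<lambda>s. (f1 s \<bullet> f2 s) *\<^sub>R mat 1) has_vector_derivative (f1 t \<bullet> v2 + v1 \<bullet> f2 t) *\<^sub>R mat 1)
      (at t within S)"
    by simp
  have cross: "((\<lambda>s. cross3 (f1 s) (f2 s)) has_vector_derivative cross3 (f1 t) v2 + cross3 v1 (f2 t))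
      (at t within S)"
    by (rule bounded_bilinear.has_vector_derivative[OF bounded_bilinear_cross3 f1 f2])
  have "f1 t + f2 t \<noteq> 0"
    using \<open>f1 t \<noteq> - f2 t\<close> by (simp add: add_eq_0_iff2)
  from has_field_derivative_inverse_norm_sq[OF has_vector_derivative_add[OF f1 f2] this, of 2]
  have coeff: "((\<lambda>s. 2 / (norm (f1 s + f2 s))\<^sup>2) has_field_derivative
      - (4 * ((f1 t + f2 t) \<bullet> (v1 + v2)) / norm (f1 t + f2 t) ^ 4)) (at t within S)"
    by simp
  let ?w = "cross3 (f1 t) (f2 t)" and ?w' = "cross3 (f1 t) v2 + cross3 v1 (f2 t)"
  have "((\<lambda>s. Rot_smooth (f1 s) (f2 s)) has_vector_derivative
      (f1 t \<bullet> v2 + v1 \<bullet> f2 t) *\<^sub>R mat 1 - (outer3 (f1 t) v2 + outer3 v1 (f2 t))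
      + (outer3 (f2 t) v1 + outer3 v2 (f1 t))
      + ((2 / (norm (f1 t + f2 t))\<^sup>2) *\<^sub>R (outer3 ?w ?w' + outer3 ?w' ?w)
         + (- (4 * ((f1 t + f2 t) \<bullet> (v1 + v2)) / norm (f1 t + f2 t) ^ 4)) *\<^sub>R outer3 ?w ?w))
      (at t within S)"
    unfolding Rot_smooth_def
    by (intro has_vector_derivative_add has_vector_derivative_diff inner
        outer3_rule[OF f1 f2] outer3_rule[OF f2 f1]
        has_vector_derivative_scaleR[OF coeff outer3_rule[OF cross cross]])
  then show ?thesis
    by (simp add: Rot_smooth_deriv_def Let_def add_diff_eq)
qed

lemma mat_norm_outer3_add_le:
  "mat_norm (outer3 a b + outer3 c d) \<le> norm a * norm b + norm c * norm d"
  using mat_norm_add_le[of "outer3 a b" "outer3 c d"] mat_norm_outer3_le[of a b]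
    mat_norm_outer3_le[of c d]
  by linarith

lemma mat_norm_outer3_sym_scaled_le:
  assumes "norm w \<le> p" "norm w' \<le> 2 * V" "p > 0"
  shows "mat_norm ((2 / p\<^sup>2) *\<^sub>R (outer3 w w' + outer3 w' w)) \<le> 8 * V / p"
proof -
  have "norm w * norm w' \<le> p * (2 * V)"
    using assms by (intro mult_mono) simp_all
  then have "mat_norm (outer3 w w' + outer3 w' w) \<le> 2 * (p * (2 * V))"
    using mat_norm_outer3_add_le[of w w' w' w] mult.commute[of "norm w'" "norm w"] by linarith
  then have "2 / p\<^sup>2 * mat_norm (outer3 w w' + outer3 w' w) \<le> 2 / p\<^sup>2 * (2 * (p * (2 * V)))"
    by (rule mult_left_mono) simp
  also have "\<dots> = 8 * V / p"
    using \<open>p > 0\<close> by (simp add: field_simps power2_eq_square)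
  finally show ?thesis
    by (simp add: mat_norm_scaleR)
qed

lemma mat_norm_outer3_self_scaled_le:
  assumes "norm w \<le> p" "\<bar>q\<bar> \<le> p * (2 * V)" "p > 0" "V \<ge> 0"
  shows "mat_norm ((4 * q / p ^ 4) *\<^sub>R outer3 w w) \<le> 8 * V / p"
proof -
  have "4 * \<bar>q\<bar> / p ^ 4 \<le> 4 * (p * (2 * V)) / p ^ 4"
    using assms(2) by (intro divide_right_mono mult_left_mono) simp_all
  then have "\<bar>4 * q / p ^ 4\<bar> \<le> 4 * (p * (2 * V)) / p ^ 4"
    by (simp add: abs_mult)
  moreover have "mat_norm (outer3 w w) \<le> p\<^sup>2"
    using mat_norm_outer3_le[of w w] mult_mono[OF assms(1) assms(1)] \<open>p > 0\<close>
    by (simp add: power2_eq_square)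
  ultimately have "mat_norm ((4 * q / p ^ 4) *\<^sub>R outer3 w w) \<le> 4 * (p * (2 * V)) / p ^ 4 * p\<^sup>2"
    unfolding mat_norm_scaleR using assms by (intro mult_mono) (simp_all add: mat_norm_nonneg)
  also have "\<dots> = 8 * V / p"
    using \<open>p > 0\<close> by (simp add: field_simps power2_eq_square power4_eq_xxxx)
  finally show ?thesis .
qed

lemma mat_norm_Rot_smooth_deriv_le:
  assumes unit: "norm x1 = 1" "norm x2 = 1" and "x1 \<noteq> - x2"
    and speed: "norm v1 \<le> V" "norm v2 \<le> V"
  shows "mat_norm (Rot_smooth_deriv x1 x2 v1 v2) \<le> 6 * V + 16 * V / norm (x1 + x2)"
proof -
  define p w w' where "p = norm (x1 + x2)" and "w = cross3 x1 x2"
    and "w' = cross3 x1 v2 + cross3 v1 x2"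
  have "p > 0"
    using \<open>x1 \<noteq> - x2\<close> by (simp add: p_def add_eq_0_iff2)
  have "V \<ge> 0"
    using speed(1) norm_ge_zero order_trans by blast
  have w: "norm w \<le> p"
    unfolding w_def p_def by (rule norm_cross3_le_norm_add[OF unit])
  have w': "norm w' \<le> 2 * V"
    unfolding w'_def
    using norm_triangle_ineq[of "cross3 x1 v2" "cross3 v1 x2"]
      norm_cross3_le[of x1 v2] norm_cross3_le[of v1 x2] unit speed
    by simp
  have "\<bar>(x1 + x2) \<bullet> (v1 + v2)\<bar> \<le> p * norm (v1 + v2)"
    unfolding p_def by (rule Cauchy_Schwarz_ineq2)
  also have "\<dots> \<le> p * (2 * V)"
    using norm_triangle_ineq[of v1 v2] speed \<open>p > 0\<close> by (intro mult_left_mono) simp_all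
  finally have q: "\<bar>(x1 + x2) \<bullet> (v1 + v2)\<bar> \<le> p * (2 * V)" .
  have trace: "mat_norm ((x1 \<bullet> v2 + v1 \<bullet> x2) *\<^sub>R mat 1) \<le> 2 * V"
    using Cauchy_Schwarz_ineq2[of x1 v2] Cauchy_Schwarz_ineq2[of v1 x2] unit speed
    by (simp add: mat_norm_scaleR mat_norm_mat_1)
  have pair: "mat_norm (outer3 y1 u2 + outer3 u1 y2) \<le> 2 * V"
    if "norm y1 = 1" "norm y2 = 1" "norm u1 \<le> V" "norm u2 \<le> V" for y1 y2 u1 u2
    using mat_norm_outer3_add_le[of y1 u2 u1 y2] that by simp
  have "mat_norm (Rot_smooth_deriv x1 x2 v1 v2) \<le> 2 * V + 2 * V + 2 * V + 8 * V / p + 8 * V / p"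
    unfolding Rot_smooth_deriv_def Let_def p_def[symmetric] w_def[symmetric] w'_def[symmetric]
    by (intro mat_norm_diff_le[THEN order_trans] mat_norm_add_le[THEN order_trans] add_mono
        trace pair unit speed mat_norm_outer3_sym_scaled_le mat_norm_outer3_self_scaled_le
        w w' q \<open>p > 0\<close> \<open>V \<ge> 0\<close>)
  then show ?thesis
    unfolding p_def by simp
qed

theorem lemma4p2:
  fixes N :: nat and a b Vmax :: real
    and x v :: "nat \<Rightarrow> real \<Rightarrow> real^3"
  assumes "a < b"
    and "Vmax \<ge> 0"
    and dx: "\<And>i t. i \<in> {1..N} \<Longrightarrow> t \<in> {a<..<b} \<Longrightarrow>
               (x i has_vector_derivative v i t) (at t)"
    and dv: "\<And>i t. i \<in> {1..N} \<Longrightarrow> t \<in> {a<..<b} \<Longrightarrow>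
               (\<lambda>s. v i s) differentiable (at t)"
    and unit: "\<And>i t. i \<in> {1..N} \<Longrightarrow> t \<in> {a<..<b} \<Longrightarrow> norm (x i t) = 1"
    and tang: "\<And>i t. i \<in> {1..N} \<Longrightarrow> t \<in> {a<..<b} \<Longrightarrow> v i t \<bullet> x i t = 0"
    and vbd: "\<And>i t. i \<in> {1..N} \<Longrightarrow> t \<in> {a<..<b} \<Longrightarrow> norm (v i t) \<le> Vmax"
    and nanti: "\<And>i j t. i \<in> {1..N} \<Longrightarrow> j \<in> {1..N} \<Longrightarrow> t \<in> {a<..<b} \<Longrightarrow>
               x i t \<noteq> - x j t"
  shows "\<exists>C>0. \<forall>t\<in>{a<..<b}. \<forall>i\<in>{1..N}. \<forall>j\<in>{1..N}.
           \<exists>D. ((\<lambda>s. Rot (x j s) (x i s)) has_vector_derivative D) (at t) \<and>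
               mat_norm D \<le> C * Vmax + C / norm (x i t + x j t) * Vmax"
proof (rule exI[of _ 16], intro conjI ballI)
  fix t i j
  assume t: "t \<in> {a<..<b}" and i: "i \<in> {1..N}" and j: "j \<in> {1..N}"
  let ?D = "Rot_smooth_deriv (x j t) (x i t) (v j t) (v i t)"
  have "((\<lambda>s. Rot (x j s) (x i s)) has_vector_derivative ?D) (at t)"
  proof (rule has_vector_derivative_transform_within_open[OF _ open_greaterThanLessThan t])
    show "((\<lambda>s. Rot_smooth (x j s) (x i s)) has_vector_derivative ?D) (at t)"
      by (rule has_vector_derivative_Rot_smooth[OF dx[OF j t] dx[OF i t] nanti[OF j i t]])
    show "Rot_smooth (x j s) (x i s) = Rot (x j s) (x i s)" if "s \<in> {a<..<b}" for s
      using Rot_eq_Rot_smooth[OF unit[OF j that] unit[OF i that] nanti[OF j i that]] by simp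
  qed
  moreover have "mat_norm ?D \<le> 16 * Vmax + 16 / norm (x i t + x j t) * Vmax"
    using mat_norm_Rot_smooth_deriv_le[OF unit[OF j t] unit[OF i t] nanti[OF j i t] vbd[OF j t] vbd[OF i t]]
      \<open>Vmax \<ge> 0\<close>
    by (simp add: add.commute)
  ultimately show "\<exists>D. ((\<lambda>s. Rot (x j s) (x i s)) has_vector_derivative D) (at t) \<and>
      mat_norm D \<le> 16 * Vmax + 16 / norm (x i t + x j t) * Vmax"
    by blast
qed simp

end
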